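(* Let $S$ be a finite semigroup. If every direct power $\Pi\mathrm{Pr}(S)=\prod_{i\in I}\mathrm{Pr}(S)$ is $\mathcal{L}_{s\text{-}pred}(\Pi S)$-equationally Noetherian, then $\mathrm{Ker}(S)=\mathrm{Red}(S)$ and $\mathrm{Ker}(S)$ is a rectangular band of groups.
   Context: $\mathcal{L}_{s\text{-}pred}=\{M\}$ with $M$ ternary; $\mathrm{Pr}(S)$ is the structure on $S$ with $M(x,y,z)\Leftrightarrow xy=z$. The direct power consists of sequences $[a_i\mid i\in I]$ with $M$ holding coordinatewise; $\mathcal{L}_{s\text{-}pred}(\Pi S)$ adds a constant symbol for every element of the power. Equations are atomic formulas ($M(t_1,t_2,t_3)$ or $t_1=t_2$, each $t_k$ a variable or constant); systems are sets of equations in a fixed finite set of variables; a structure is equationally Noetherian (in this language) if every system is equivalent (same solution set) to a finite subsystem. $\mathrm{Ker}(S)$ is the minimal two-sided ideal of $S$; $\mathrm{Red}(S)=\{ab\mid a,b\in S\}$ is the set of reducible elements. A semigroup is a rectangular band of groups if it is isomorphic to the set of triples $(\lambda,g,i)$, $\lambda\in\Lambda$, $g\in G$, $i\in I$ (for a finite group $G$ and finite sets $\Lambda,I$) with multiplication $(\lambda,g,i)(\mu,h,j)=(\lambda,gh,j)$. *)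

theory Defs
  imports Main "HOL-Algebra.Group"
begin

datatype 'c trm = Var nat | Cst 'c

datatype 'c eqn = MEq "'c trm" "'c trm" "'c trm" | EEq "'c trm" "'c trm"

fun trm_eval :: "(nat \<Rightarrow> 'c) \<Rightarrow> 'c trm \<Rightarrow> 'c" where
  "trm_eval x (Var k) = x k"
| "trm_eval x (Cst c) = c"

fun trm_vars :: "'c trm \<Rightarrow> nat set" where
  "trm_vars (Var k) = {k}"
| "trm_vars (Cst c) = {}"

fun trm_consts :: "'c trm \<Rightarrow> 'c set" where
  "trm_consts (Var k) = {}"
| "trm_consts (Cst c) = {c}"

fun eqn_vars :: "'c eqn \<Rightarrow> nat set" where
  "eqn_vars (MEq a b c) = trm_vars a \<union> trm_vars b \<union> trm_vars c"
| "eqn_vars (EEq a b) = trm_vars a \<union> trm_vars b"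

fun eqn_consts :: "'c eqn \<Rightarrow> 'c set" where
  "eqn_consts (MEq a b c) = trm_consts a \<union> trm_consts b \<union> trm_consts c"
| "eqn_consts (EEq a b) = trm_consts a \<union> trm_consts b"

fun eqn_sat :: "('c \<Rightarrow> 'c \<Rightarrow> 'c \<Rightarrow> bool) \<Rightarrow> (nat \<Rightarrow> 'c) \<Rightarrow> 'c eqn \<Rightarrow> bool" where
  "eqn_sat R x (MEq a b c) = R (trm_eval x a) (trm_eval x b) (trm_eval x c)"
| "eqn_sat R x (EEq a b) = (trm_eval x a = trm_eval x b)"

text \<open>Solution set of a system in the variables x_0,...,x_(n-1) over the structure
  with universe U and ternary relation R (assignments are n-tuples, encoded as
  functions that are undefined outside {..<n}).\<close>
definition sols :: "'c set \<Rightarrow> ('c \<Rightarrow> 'c \<Rightarrow> 'c \<Rightarrow> bool) \<Rightarrow> nat \<Rightarrow> 'c eqn set \<Rightarrow> (nat \<Rightarrow> 'c) set" where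
  "sols U R n Sys = {x. (\<forall>j<n. x j \<in> U) \<and> (\<forall>j\<ge>n. x j = undefined) \<and> (\<forall>e\<in>Sys. eqn_sat R x e)}"

definition eq_noetherian :: "'c set \<Rightarrow> ('c \<Rightarrow> 'c \<Rightarrow> 'c \<Rightarrow> bool) \<Rightarrow> bool" where
  "eq_noetherian U R \<longleftrightarrow>
     (\<forall>n Sys. (\<forall>e\<in>Sys. eqn_vars e \<subseteq> {..<n} \<and> eqn_consts e \<subseteq> U) \<longrightarrow>
        (\<exists>Sys0\<subseteq>Sys. finite Sys0 \<and> sols U R n Sys0 = sols U R n Sys))"

definition pow_carrier :: "'i set \<Rightarrow> ('i \<Rightarrow> 'a) set" where
  "pow_carrier I = {f. \<forall>i. i \<notin> I \<longrightarrow> f i = undefined}"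

definition pow_M :: "'i set \<Rightarrow> ('i \<Rightarrow> 'a::semigroup_mult) \<Rightarrow> ('i \<Rightarrow> 'a) \<Rightarrow> ('i \<Rightarrow> 'a) \<Rightarrow> bool" where
  "pow_M I f g h \<longleftrightarrow> (\<forall>i\<in>I. f i * g i = h i)"

definition sg_ideal :: "'a::semigroup_mult set \<Rightarrow> bool" where
  "sg_ideal J \<longleftrightarrow> J \<noteq> {} \<and> (\<forall>x\<in>J. \<forall>s. s * x \<in> J \<and> x * s \<in> J)"

definition Ker :: "'a::semigroup_mult set" where
  "Ker = (THE J. sg_ideal J \<and> (\<forall>K. sg_ideal K \<longrightarrow> J \<subseteq> K))"

definition Red :: "'a::semigroup_mult set" where
  "Red = {a * b | a b. True}"

definition rect_band_of_groups :: "'a::semigroup_mult set \<Rightarrow> bool" where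
  "rect_band_of_groups K \<longleftrightarrow>
     (\<exists>(L::'a set) (G::'a monoid) (J::'a set) \<phi>.
        finite L \<and> finite J \<and> group G \<and> finite (carrier G) \<and>
        bij_betw \<phi> (L \<times> carrier G \<times> J) K \<and>
        (\<forall>l\<in>L. \<forall>g\<in>carrier G. \<forall>i\<in>J. \<forall>m\<in>L. \<forall>h\<in>carrier G. \<forall>j\<in>J.
           \<phi> (l, g, i) * \<phi> (m, h, j) = \<phi> (l, g \<otimes>\<^bsub>G\<^esub> h, j)))"

end

theory Submission
  imports Defs
begin

(* Equational Noetherianity of an infinite power forces all right translations x |-> x c of S to
   have the same kernel: if x c = y c but x d ~= y d, the equations X C_i = D_i (i in I), where
   C_i and D_i are constantly c and x c except for d and x d at coordinate i, form a system with no
   equivalent finite subsystem, because the point that is x except for y at a fresh coordinate i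
   solves all equations but the i-th.

   In a finite semigroup with this property every idempotent e is a middle unit (a e b = a b), and
   e lies in S(u e) for every u since all the sets S c have the same size. Hence every ideal
   contains e and so every product a b = a e b, i.e. Ker S = Red S. Moreover e S e is a group G,
   and u |-> (u g^-1, g, g^-1 u) with g = e u e inverts (l, g, j) |-> l g j on L x G x J, where L
   and J are the idempotents l, j with l e = l and e j = j. *)

definition pow_const :: "'i set \<Rightarrow> 'a \<Rightarrow> 'i \<Rightarrow> 'a" where
  "pow_const I a = (\<lambda>i. if i \<in> I then a else undefined)"

lemma pow_const_upd_in_pow_carrier: "i \<in> I \<Longrightarrow> (pow_const I a)(i := b) \<in> pow_carrier I"
  by (simp add: pow_const_def pow_carrier_def)

lemma eq_noetherian_power_right_kernels_eq:
  fixes x y c d :: "'a::semigroup_mult" and I :: "'i set"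
  assumes "infinite I"
    and noeth: "eq_noetherian (pow_carrier I :: ('i \<Rightarrow> 'a) set) (pow_M I)"
    and "x * c = y * c"
  shows "x * d = y * d"
proof (rule ccontr)
  assume "x * d \<noteq> y * d"
  define E where "E i = MEq (Var 0) (Cst ((pow_const I c)(i := d)))
    (Cst ((pow_const I (x * c))(i := x * d)))" for i
  define Z where "Z i = (\<lambda>_ :: nat. undefined)(0 := (pow_const I x)(i := y))" for i
  have Z_sols: "Z i \<in> sols (pow_carrier I) (pow_M I) 1 (E ` A) \<longleftrightarrow> i \<notin> A"
    if "i \<in> I" "A \<subseteq> I" for i A
    using that \<open>x * c = y * c\<close> \<open>x * d \<noteq> y * d\<close>
    by (auto simp: sols_def E_def Z_def pow_M_def pow_const_def pow_carrier_def)
  have "\<forall>e \<in> E ` I. eqn_vars e \<subseteq> {..<1} \<and> eqn_consts e \<subseteq> pow_carrier I"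
    by (auto simp: E_def pow_const_upd_in_pow_carrier)
  then have "\<exists>F \<subseteq> E ` I. finite F \<and>
      sols (pow_carrier I) (pow_M I) 1 F = sols (pow_carrier I) (pow_M I) 1 (E ` I)"
    using noeth unfolding eq_noetherian_def by blast
  then obtain F where "F \<subseteq> E ` I" "finite F"
    and F_equiv: "sols (pow_carrier I) (pow_M I) 1 F = sols (pow_carrier I) (pow_M I) 1 (E ` I)"
    by blast
  then obtain K where "K \<subseteq> I" "finite K" "F = E ` K"
    by (meson finite_subset_image)
  moreover have "infinite (I - K)"
    using \<open>finite K\<close> \<open>infinite I\<close> by (rule Diff_infinite_finite)
  then obtain i where "i \<in> I" "i \<notin> K"
    using infinite_imp_nonempty by blast
  ultimately show False
    using F_equiv Z_sols[of i K] Z_sols[of i I] by simp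
qed

lemma card_range_eq_if_same_kernel:
  assumes "\<And>x y. f x = f y \<longleftrightarrow> g x = g y"
  shows "card (range f) = card (range g)"
proof (rule bij_betw_same_card)
  have g_inv: "g (inv_into UNIV f (f x)) = g x" for x
    using assms f_inv_into_f[of "f x" f UNIV] by blast
  show "bij_betw (\<lambda>z. g (inv_into UNIV f z)) (range f) (range g)"
  proof (rule bij_betw_imageI)
    show "inj_on (\<lambda>z. g (inv_into UNIV f z)) (range f)"
      by (rule inj_onI) (auto simp: g_inv assms)
    show "(\<lambda>z. g (inv_into UNIV f z)) ` range f = range g"
      by (simp add: image_image g_inv)
  qed
qed

fun spow :: "'a::semigroup_mult \<Rightarrow> nat \<Rightarrow> 'a" where
  "spow x 0 = x"
| "spow x (Suc n) = spow x n * x"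

lemma spow_mult: "spow x m * spow x n = spow x (Suc (m + n))"
  by (induction n) (simp_all add: mult.assoc[symmetric])

lemma spow_periodic:
  assumes period: "spow x (i + p) = spow x i" and "i \<le> m"
  shows "spow x (m + q * p) = spow x m"
proof -
  have shift: "spow x (n + p) = spow x n" if "i \<le> n" for n
    using that by (induction n rule: nat_induct_at_least) (simp_all add: period)
  show ?thesis
  proof (induction q)
    case (Suc q)
    have "spow x (m + Suc q * p) = spow x (m + q * p + p)"
      by (simp add: algebra_simps)
    also have "\<dots> = spow x m"
      using shift[of "m + q * p"] \<open>i \<le> m\<close> Suc.IH by simp
    finally show ?case .
  qed simp
qed

lemma finite_semigroup_idem_exists: "\<exists>e::'a::{semigroup_mult,finite}. e * e = e"
proof -
  fix x :: 'a
  have "\<not> inj (spow x)"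
    using finite_imageD[of "spow x" UNIV] by auto
  then obtain a b where "a \<noteq> b" "spow x a = spow x b"
    unfolding inj_def by blast
  then obtain i j where "i < j" "spow x j = spow x i"
    by (cases "a < b") (auto dest: sym simp: not_less_iff_gr_or_eq)
  then have period: "spow x (i + (j - i)) = spow x i" by simp
  obtain n where n: "Suc n = Suc i * (j - i)"
    using \<open>i < j\<close> by (intro that[of "Suc i * (j - i) - 1"]) simp
  moreover have "Suc i * 1 \<le> Suc i * (j - i)"
    using \<open>i < j\<close> by (intro mult_le_mono2) simp
  ultimately have "i \<le> n" by simp
  have "spow x n * spow x n = spow x (n + Suc i * (j - i))"
    by (simp only: spow_mult n add_Suc_right[symmetric])
  also have "\<dots> = spow x n"
    using spow_periodic[OF period \<open>i \<le> n\<close>] .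
  finally show ?thesis by blast
qed

lemma Ker_eqI:
  assumes "sg_ideal J" and "\<And>K. sg_ideal K \<Longrightarrow> J \<subseteq> K"
  shows "Ker = J"
  unfolding Ker_def using assms by (intro the_equality) auto

lemma sg_ideal_Red: "sg_ideal Red"
  unfolding sg_ideal_def Red_def by blast

definition local_monoid :: "'a::semigroup_mult \<Rightarrow> 'a monoid" where
  "local_monoid e = \<lparr>carrier = range (\<lambda>x. e * x * e), mult = (*), one = e\<rparr>"

lemma carrier_local_monoid: "carrier (local_monoid e) = range (\<lambda>x. e * x * e)"
  and one_local_monoid: "\<one>\<^bsub>local_monoid e\<^esub> = e"
  and mult_local_monoid: "g \<otimes>\<^bsub>local_monoid e\<^esub> h = g * h"
  by (simp_all add: local_monoid_def)

definition left_idems :: "'a::semigroup_mult \<Rightarrow> 'a set" where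
  "left_idems e = {l. l * l = l \<and> l * e = l}"

definition right_idems :: "'a::semigroup_mult \<Rightarrow> 'a set" where
  "right_idems e = {j. j * j = j \<and> e * j = j}"

context
  assumes right_kernels_eq:
    "\<And>x y c d :: 'a::{semigroup_mult,finite}. x * c = y * c \<Longrightarrow> x * d = y * d"
begin

lemma idem_middle_unit:
  fixes a e b :: 'a
  assumes "e * e = e"
  shows "a * (e * b) = a * b"
  using right_kernels_eq[where x = "a * e" and y = a and c = e and d = b] assms
  by (simp add: mult.assoc)

lemma idem_in_left_ideal:
  fixes e u :: 'a
  assumes "e * e = e"
  shows "e \<in> range (\<lambda>s. s * (u * e))"
proof -
  have sub: "range (\<lambda>s. s * (u * e)) \<subseteq> range (\<lambda>s. s * e)"
    by (auto simp flip: mult.assoc)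
  have "card (range (\<lambda>s. s * (u * e))) = card (range (\<lambda>s. s * e))"
    by (rule card_range_eq_if_same_kernel) (metis right_kernels_eq)
  then have "range (\<lambda>s. s * (u * e)) = range (\<lambda>s. s * e)"
    using sub by (simp add: card_subset_eq)
  moreover have "e \<in> range (\<lambda>s. s * e)"
    using assms by (metis rangeI)
  ultimately show ?thesis by simp
qed

lemma idem_in_ideal:
  fixes e :: 'a
  assumes "e * e = e" and "sg_ideal K"
  shows "e \<in> K"
proof -
  obtain k where "k \<in> K"
    using \<open>sg_ideal K\<close> unfolding sg_ideal_def by blast
  moreover obtain s where "e = s * (k * e)"
    using idem_in_left_ideal[OF \<open>e * e = e\<close>] by blast
  ultimately show ?thesis
    using \<open>sg_ideal K\<close> unfolding sg_ideal_def by metis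
qed

lemma Red_subset_ideal:
  assumes "sg_ideal K"
  shows "Red \<subseteq> (K :: 'a set)"
proof
  fix u :: 'a
  assume "u \<in> Red"
  then obtain a b where "u = a * b"
    unfolding Red_def by blast
  obtain e :: 'a where "e * e = e"
    using finite_semigroup_idem_exists by blast
  then have "u = a * (e * b)" and "e \<in> K"
    using \<open>u = a * b\<close> idem_middle_unit idem_in_ideal assms by simp_all
  then show "u \<in> K"
    using assms unfolding sg_ideal_def by blast
qed

lemma Ker_eq_Red: "Ker = (Red :: 'a set)"
  using sg_ideal_Red Red_subset_ideal by (rule Ker_eqI)

context
  fixes e :: 'a
  assumes idem: "e * e = e"
begin

lemma e_middle_unit: "a * (e * b) = a * b"
  using idem by (rule idem_middle_unit)

lemma local_monoid_unit:
  assumes "g \<in> carrier (local_monoid e)"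
  shows "e * g = g" and "g * e = g"
  using assms by (auto simp: carrier_local_monoid mult.assoc idem e_middle_unit)

lemma group_local_monoid: "group (local_monoid e)"
proof (rule groupI, unfold mult_local_monoid one_local_monoid)
  fix g h
  assume "g \<in> carrier (local_monoid e)" and "h \<in> carrier (local_monoid e)"
  then obtain a b where "g = e * a * e" and "h = e * b * e"
    by (auto simp: carrier_local_monoid)
  then have "g * h = e * (a * b) * e"
    by (simp add: mult.assoc e_middle_unit)
  then show "g * h \<in> carrier (local_monoid e)"
    by (simp add: carrier_local_monoid)
next
  show "e \<in> carrier (local_monoid e)"
    using idem by (simp add: carrier_local_monoid image_iff) (metis)
next
  fix g
  assume g: "g \<in> carrier (local_monoid e)"
  then show "e * g = g"
    by (rule local_monoid_unit)
  obtain s where "e = s * (g * e)"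
    using idem_in_left_ideal[OF idem] by blast
  then have "e * s * e * g = e"
    using local_monoid_unit[OF g] idem by (simp add: mult.assoc)
  then show "\<exists>h \<in> carrier (local_monoid e). h * g = e"
    by (auto simp: carrier_local_monoid)
qed (simp add: mult.assoc)

lemma left_idem_absorb: "l \<in> left_idems e \<Longrightarrow> e * l = e"
  unfolding left_idems_def using idem_middle_unit[of l e e] idem by auto

lemma right_idem_absorb:
  assumes "j \<in> right_idems e"
  shows "j * e = e"
proof -
  have "j * e = e * (j * e)"
    using assms by (simp add: right_idems_def flip: mult.assoc)
  also have "\<dots> = e"
    using assms idem_middle_unit[of j e e] idem by (simp add: right_idems_def)
  finally show ?thesis .
qed

lemma right_idem_mult_left_idem:
  assumes "j \<in> right_idems e" and "l \<in> left_idems e"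
  shows "j * l = e"
proof -
  have "l * (j * l) = l"
    using assms idem_middle_unit[of j l l] by (simp add: left_idems_def right_idems_def)
  then have jl_idem: "(j * l) * (j * l) = j * l"
    by (simp add: mult.assoc)
  have "j * l = (e * j) * (l * e)"
    using assms by (simp add: left_idems_def right_idems_def)
  also have "\<dots> = e * ((j * l) * e)"
    by (simp add: mult.assoc)
  also have "\<dots> = e"
    using idem_middle_unit[OF jl_idem, of e e] idem by simp
  finally show ?thesis .
qed

lemma rect_middle_component:
  assumes "l \<in> left_idems e" and "g \<in> carrier (local_monoid e)" and "j \<in> right_idems e"
  shows "e * (l * g * j) * e = g"
proof -
  have "e * (l * g * j) * e = (e * l) * g * (j * e)"
    by (simp add: mult.assoc)
  also have "\<dots> = g"
    using assms by (simp add: left_idem_absorb right_idem_absorb local_monoid_unit)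
  finally show ?thesis .
qed

lemma rect_left_component:
  assumes "l \<in> left_idems e" and g: "g \<in> carrier (local_monoid e)" and "j \<in> right_idems e"
  shows "l * g * j * inv\<^bsub>local_monoid e\<^esub> g = l"
proof -
  interpret G: group "local_monoid e"
    by (rule group_local_monoid)
  have "l * g * j * inv\<^bsub>local_monoid e\<^esub> g = l * g * (j * e) * inv\<^bsub>local_monoid e\<^esub> g"
    by (simp add: mult.assoc e_middle_unit)
  also have "\<dots> = l * (g \<otimes>\<^bsub>local_monoid e\<^esub> inv\<^bsub>local_monoid e\<^esub> g)"
    using assms by (simp add: right_idem_absorb local_monoid_unit mult_local_monoid mult.assoc)
  also have "\<dots> = l"
    using assms by (simp add: one_local_monoid left_idems_def)
  finally show ?thesis .
qed

lemma rect_right_component: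
  assumes "l \<in> left_idems e" and g: "g \<in> carrier (local_monoid e)" and "j \<in> right_idems e"
  shows "inv\<^bsub>local_monoid e\<^esub> g * (l * g * j) = j"
proof -
  interpret G: group "local_monoid e"
    by (rule group_local_monoid)
  have "inv\<^bsub>local_monoid e\<^esub> g * (l * g * j) = inv\<^bsub>local_monoid e\<^esub> g * (e * l) * g * j"
    by (simp add: mult.assoc e_middle_unit)
  also have "\<dots> = (inv\<^bsub>local_monoid e\<^esub> g \<otimes>\<^bsub>local_monoid e\<^esub> g) * j"
    using assms by (simp add: left_idem_absorb local_monoid_unit mult_local_monoid)
  also have "\<dots> = j"
    using assms by (simp add: one_local_monoid right_idems_def)
  finally show ?thesis .
qed

lemma Red_regular_local_inv:
  assumes "u \<in> Red"
  shows "u * inv\<^bsub>local_monoid e\<^esub> (e * u * e) * u = u"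
proof -
  interpret G: group "local_monoid e"
    by (rule group_local_monoid)
  obtain a b where u: "u = a * b"
    using assms unfolding Red_def by blast
  define \<alpha> \<beta> where "\<alpha> = e * a * e" and "\<beta> = e * b * e"
  define h where "h = inv\<^bsub>local_monoid e\<^esub> (e * u * e)"
  have \<alpha>\<beta>: "\<alpha> \<in> carrier (local_monoid e)" "\<beta> \<in> carrier (local_monoid e)"
    by (auto simp: \<alpha>_def \<beta>_def carrier_local_monoid)
  have "e * u * e = \<alpha> \<otimes>\<^bsub>local_monoid e\<^esub> \<beta>"
    by (simp add: u \<alpha>_def \<beta>_def mult_local_monoid mult.assoc e_middle_unit)
  then have "\<beta> \<otimes>\<^bsub>local_monoid e\<^esub> h \<otimes>\<^bsub>local_monoid e\<^esub> \<alpha> = \<one>\<^bsub>local_monoid e\<^esub>"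
    using \<alpha>\<beta> by (simp add: h_def G.inv_mult_group G.m_assoc)
  then have "\<beta> * h * \<alpha> = e"
    by (simp add: mult_local_monoid one_local_monoid)
  have "u * h * u = a * (\<beta> * h * \<alpha>) * b"
    by (simp add: u \<alpha>_def \<beta>_def mult.assoc e_middle_unit)
  also have "\<dots> = u"
    using \<open>\<beta> * h * \<alpha> = e\<close> by (simp add: u mult.assoc e_middle_unit)
  finally show ?thesis
    unfolding h_def .
qed

lemma bij_betw_rect_decomposition:
  "bij_betw (\<lambda>(l, g, j). l * g * j) (left_idems e \<times> carrier (local_monoid e) \<times> right_idems e) Red"
proof -
  interpret G: group "local_monoid e"
    by (rule group_local_monoid)
  define h where "h u = inv\<^bsub>local_monoid e\<^esub> (e * u * e)" for u
  have h_carrier: "h u \<in> carrier (local_monoid e)" for u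
    unfolding h_def by (rule G.inv_closed) (auto simp: carrier_local_monoid)
  have uhu: "u * h u * u = u" if "u \<in> Red" for u
    unfolding h_def using that by (rule Red_regular_local_inv)
  have left_inverse:
    "(l * g * j * h (l * g * j), e * (l * g * j) * e, h (l * g * j) * (l * g * j)) = (l, g, j)"
    if "l \<in> left_idems e" "g \<in> carrier (local_monoid e)" "j \<in> right_idems e" for l g j
    using that by (simp add: h_def rect_middle_component rect_left_component rect_right_component)
  have right_inverse: "(u * h u) * (e * u * e) * (h u * u) = u" if "u \<in> Red" for u
  proof -
    have "(u * h u) * (e * u * e) * (h u * u) = u * (h u \<otimes>\<^bsub>local_monoid e\<^esub> (e * u * e)) * h u * u"
      by (simp add: mult_local_monoid mult.assoc)
    also have "\<dots> = u * h u * u"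
      unfolding h_def by (simp add: carrier_local_monoid one_local_monoid mult.assoc e_middle_unit)
    finally show ?thesis
      using uhu[OF that] by simp
  qed
  have components: "(u * h u, e * u * e, h u * u) \<in> left_idems e \<times> carrier (local_monoid e) \<times> right_idems e"
    if "u \<in> Red" for u
  proof -
    have "(u * h u) * (u * h u) = u * h u" "(h u * u) * (h u * u) = h u * u"
      using uhu[OF that] by (metis mult.assoc)+
    moreover have "(u * h u) * e = u * h u" "e * (h u * u) = h u * u"
      using local_monoid_unit[OF h_carrier] by (simp add: mult.assoc, simp flip: mult.assoc)
    ultimately show ?thesis
      by (auto simp: left_idems_def right_idems_def carrier_local_monoid)
  qed
  have "l * g * j \<in> Red" for l g j :: 'a
    by (auto simp: Red_def)
  with left_inverse right_inverse components show ?thesis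
    by (intro bij_betw_byWitness[where f' = "\<lambda>u. (u * h u, e * u * e, h u * u)"]) auto
qed

lemma rect_mult:
  assumes "l \<in> left_idems e" "g \<in> carrier (local_monoid e)" "i \<in> right_idems e"
    and "m \<in> left_idems e" "k \<in> carrier (local_monoid e)" "j \<in> right_idems e"
  shows "(l * g * i) * (m * k * j) = l * (g \<otimes>\<^bsub>local_monoid e\<^esub> k) * j"
proof -
  have "(l * g * i) * (m * k * j) = l * (g * (i * m)) * k * j"
    by (simp add: mult.assoc)
  also have "\<dots> = l * (g * k) * j"
    using assms by (simp add: right_idem_mult_left_idem local_monoid_unit mult.assoc)
  finally show ?thesis
    by (simp add: mult_local_monoid)
qed

end

lemma rect_band_of_groups_Red: "rect_band_of_groups (Red :: 'a set)"
proof -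
  obtain e :: 'a where idem: "e * e = e"
    using finite_semigroup_idem_exists by blast
  show ?thesis
    unfolding rect_band_of_groups_def
    using group_local_monoid[OF idem] bij_betw_rect_decomposition[OF idem] rect_mult[OF idem]
    by (intro exI[of _ "left_idems e"] exI[of _ "local_monoid e"] exI[of _ "right_idems e"]
        exI[of _ "\<lambda>(l, g, j). l * g * j"]) auto
qed

end

theorem theorem4:
  assumes "infinite (UNIV :: 'i set)"
    and "\<forall>I :: 'i set. eq_noetherian (pow_carrier I :: ('i \<Rightarrow> 'a::{semigroup_mult,finite}) set) (pow_M I)"
  shows "Ker = (Red :: 'a set) \<and> rect_band_of_groups (Ker :: 'a set)"
proof -
  have right_kernels_eq: "x * c = y * c \<Longrightarrow> x * d = y * d" for x y c d :: 'a
    by (rule eq_noetherian_power_right_kernels_eq[OF assms(1) assms(2)[rule_format]])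
  show ?thesis
    using Ker_eq_Red[OF right_kernels_eq] rect_band_of_groups_Red[OF right_kernels_eq] by simp
qed

end
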